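(* Let $n\ge3$, $\beta>0$, $\gamma>1$ with $\beta\gamma<n$, $p,q>0$ with $q\ge p$ and $pq>(\gamma-1)^2$, $\sigma_1,\sigma_2\in(-\beta\gamma,\infty)$ with $\sigma_1\le\sigma_2$, $c_1,c_2$ double bounded, and assume $$q_0+p_0\le\frac{n-\beta\gamma}{\gamma-1}.$$ Let $(u,v)$ be a bounded and decaying positive solution of the system $u(x)=c_1(x)W_{\beta,\gamma}(|y|^{\sigma_1}v^q)(x)$, $v(x)=c_2(x)W_{\beta,\gamma}(|y|^{\sigma_2}u^p)(x)$. Then $(u,v)$ is an optimal integrable solution if and only if $(u,v)$ decays with the fast rates as $|x|\to\infty$.
   Context: For $f\ge 0$, $f\in L^1_{loc}(\mathbb{R}^n)$, the Wolff potential is $W_{\beta,\gamma}(f)(x)=\int_0^\infty\Big(\frac{\int_{B_t(x)}f(y)\,dy}{t^{n-\beta\gamma}}\Big)^{\frac{1}{\gamma-1}}\frac{dt}{t}$. A function $c$ is double bounded if $1/C\le c(x)\le C$ for some $C>0$ and all $x$. A solution is a pair of nonnegative $u,v\in L^1_{loc}(\mathbb{R}^n)$ satisfying both equations a.e.; positive if $u,v>0$. For positive $f$, $f(x)\simeq g(x)$ means $1/c\le f(x)/g(x)\le c$ for some $c>0$ and all sufficiently large $|x|$. A positive solution is decaying if $u(x)\simeq|x|^{-\theta_1}$, $v(x)\simeq|x|^{-\theta_2}$ for some $\theta_1,\theta_2>0$. $q_0=\frac{\beta\gamma(\gamma-1+q)+(\gamma-1)\sigma_1+\sigma_2 q}{pq-(\gamma-1)^2}$,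 $p_0=\frac{\beta\gamma(\gamma-1+p)+(\gamma-1)\sigma_2+\sigma_1 p}{pq-(\gamma-1)^2}$. $(u,v)$ is an optimal integrable solution if $(u,v)\in L^r(\mathbb{R}^n)\times L^s(\mathbb{R}^n)$ for all $r,s$ with $r>\frac{n(\gamma-1)}{n-\beta\gamma}$ and $s>\max\big\{\frac{n(\gamma-1)}{n-\beta\gamma},\frac{n(\gamma-1)}{p\frac{n-\beta\gamma}{\gamma-1}-(\beta\gamma+\sigma_2)}\big\}$. $(u,v)$ decays with the fast rates if $u(x)\simeq|x|^{-\frac{n-\beta\gamma}{\gamma-1}}$ and $v(x)\simeq|x|^{-\frac{n-\beta\gamma}{\gamma-1}}$ if $p\frac{n-\beta\gamma}{\gamma-1}-\sigma_2>n$; $v(x)\simeq|x|^{-\frac{n-\beta\gamma}{\gamma-1}}(\ln|x|)^{\frac{1}{\gamma-1}}$ if $p\frac{n-\beta\gamma}{\gamma-1}-\sigma_2=n$; $v(x)\simeq|x|^{-\frac{p\frac{n-\beta\gamma}{\gamma-1}-(\beta\gamma+\sigma_2)}{\gamma-1}}$ if $p\frac{n-\beta\gamma}{\gamma-1}-\sigma_2<n$. *)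

theory Defs
  imports "HOL-Analysis.Analysis"
begin

text \<open>Euclidean space R^n is modelled as real^'n, with n = CARD('n).\<close>

definition wolff :: "real \<Rightarrow> real \<Rightarrow> (real^'n::finite \<Rightarrow> real) \<Rightarrow> real^'n \<Rightarrow> ennreal" where
  "wolff \<beta> \<gamma> f x =
     (\<integral>\<^sup>+ t \<in> {0<..}.
        (let I = (\<integral>\<^sup>+ y \<in> ball x t. ennreal (f y) \<partial>lborel) in
         if I = \<infinity> then \<infinity>
         else ennreal ((enn2real I / t powr (real CARD('n) - \<beta> * \<gamma>)) powr (1 / (\<gamma> - 1)) / t))
      \<partial>lborel)"

definition double_bounded :: "('a \<Rightarrow> real) \<Rightarrow> bool" where
  "double_bounded c \<longleftrightarrow> (\<exists>C>0. \<forall>x. 1 / C \<le> c x \<and> c x \<le> C)"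

definition locally_integrable :: "(real^'n::finite \<Rightarrow> real) \<Rightarrow> bool" where
  "locally_integrable f \<longleftrightarrow> (\<forall>K. compact K \<longrightarrow> set_integrable lborel K f)"

definition asym_eq :: "(real^'n::finite \<Rightarrow> real) \<Rightarrow> (real^'n \<Rightarrow> real) \<Rightarrow> bool" where
  "asym_eq f g \<longleftrightarrow> (\<exists>c>0. \<exists>R. \<forall>x. norm x \<ge> R \<longrightarrow> 1 / c \<le> f x / g x \<and> f x / g x \<le> c)"

definition is_solution ::
  "real \<Rightarrow> real \<Rightarrow> real \<Rightarrow> real \<Rightarrow> real \<Rightarrow> real \<Rightarrow> (real^'n::finite \<Rightarrow> real) \<Rightarrow> (real^'n \<Rightarrow> real)
   \<Rightarrow> (real^'n \<Rightarrow> real) \<Rightarrow> (real^'n \<Rightarrow> real) \<Rightarrow> bool" where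
  "is_solution \<beta> \<gamma> p q \<sigma>1 \<sigma>2 c1 c2 u v \<longleftrightarrow>
     (\<forall>x. u x \<ge> 0) \<and> (\<forall>x. v x \<ge> 0) \<and> locally_integrable u \<and> locally_integrable v \<and>
     (AE x in lborel. ennreal (u x) = ennreal (c1 x) * wolff \<beta> \<gamma> (\<lambda>y. norm y powr \<sigma>1 * v y powr q) x) \<and>
     (AE x in lborel. ennreal (v x) = ennreal (c2 x) * wolff \<beta> \<gamma> (\<lambda>y. norm y powr \<sigma>2 * u y powr p) x)"

definition decaying :: "(real^'n::finite \<Rightarrow> real) \<Rightarrow> (real^'n \<Rightarrow> real) \<Rightarrow> bool" where
  "decaying u v \<longleftrightarrow> (\<forall>x. u x > 0) \<and> (\<forall>x. v x > 0) \<and>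
     (\<exists>\<theta>1>0. \<exists>\<theta>2>0. asym_eq u (\<lambda>x. norm x powr (-\<theta>1)) \<and> asym_eq v (\<lambda>x. norm x powr (-\<theta>2)))"

definition q0 :: "real \<Rightarrow> real \<Rightarrow> real \<Rightarrow> real \<Rightarrow> real \<Rightarrow> real \<Rightarrow> real" where
  "q0 \<beta> \<gamma> p q \<sigma>1 \<sigma>2 =
     (\<beta> * \<gamma> * (\<gamma> - 1 + q) + (\<gamma> - 1) * \<sigma>1 + \<sigma>2 * q) / (p * q - (\<gamma> - 1)\<^sup>2)"

definition p0 :: "real \<Rightarrow> real \<Rightarrow> real \<Rightarrow> real \<Rightarrow> real \<Rightarrow> real \<Rightarrow> real" where
  "p0 \<beta> \<gamma> p q \<sigma>1 \<sigma>2 =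
     (\<beta> * \<gamma> * (\<gamma> - 1 + p) + (\<gamma> - 1) * \<sigma>2 + \<sigma>1 * p) / (p * q - (\<gamma> - 1)\<^sup>2)"

definition optimal_integrable ::
  "real \<Rightarrow> real \<Rightarrow> real \<Rightarrow> real \<Rightarrow> (real^'n::finite \<Rightarrow> real) \<Rightarrow> (real^'n \<Rightarrow> real) \<Rightarrow> bool" where
  "optimal_integrable \<beta> \<gamma> p \<sigma>2 u v \<longleftrightarrow>
     (let n = real CARD('n) in
      (\<forall>r. r > n * (\<gamma> - 1) / (n - \<beta> * \<gamma>) \<longrightarrow> integrable lborel (\<lambda>x. \<bar>u x\<bar> powr r)) \<and>
      (\<forall>s. s > max (n * (\<gamma> - 1) / (n - \<beta> * \<gamma>))
                   (n * (\<gamma> - 1) / (p * ((n - \<beta> * \<gamma>) / (\<gamma> - 1)) - (\<beta> * \<gamma> + \<sigma>2)))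
           \<longrightarrow> integrable lborel (\<lambda>x. \<bar>v x\<bar> powr s)))"

definition fast_rates ::
  "real \<Rightarrow> real \<Rightarrow> real \<Rightarrow> real \<Rightarrow> (real^'n::finite \<Rightarrow> real) \<Rightarrow> (real^'n \<Rightarrow> real) \<Rightarrow> bool" where
  "fast_rates \<beta> \<gamma> p \<sigma>2 u v \<longleftrightarrow>
     (let n = real CARD('n); a = (n - \<beta> * \<gamma>) / (\<gamma> - 1) in
      asym_eq u (\<lambda>x. norm x powr (-a)) \<and>
      (p * a - \<sigma>2 > n \<longrightarrow> asym_eq v (\<lambda>x. norm x powr (-a))) \<and>
      (p * a - \<sigma>2 = n \<longrightarrow> asym_eq v (\<lambda>x. norm x powr (-a) * ln (norm x) powr (1 / (\<gamma> - 1)))) \<and>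
      (p * a - \<sigma>2 < n \<longrightarrow> asym_eq v (\<lambda>x. norm x powr (-((p * a - (\<beta> * \<gamma> + \<sigma>2)) / (\<gamma> - 1))))))"

end

theory Submission
  imports Defs "HOL-Real_Asymp.Real_Asymp"
begin

text \<open>
  Let a = (n - \<beta>\<gamma>)/(\<gamma> - 1), b = (p a - \<beta>\<gamma> - \<sigma>2)/(\<gamma> - 1), u \<simeq> |x|^-\<theta>1 and v \<simeq> |x|^-\<theta>2.
  Every nonzero nonnegative f has W(f)(x) \<gtrsim> |x|^-a, so the equations force \<theta>1, \<theta>2 \<le> a.
  A bounded function \<simeq> |x|^-\<theta> has |f|^s integrable iff s\<theta> > n, so optimal integrability
  says \<theta>1 \<ge> a and \<theta>2 \<ge> min a b (\<theta>2 \<ge> a when b \<le> 0). Conversely, once u \<simeq> |x|^-a, the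
  source |y|^\<sigma>2 u^p of the second equation is \<gtrsim> |y|^(\<sigma>2 - p a), whose potential is
  \<gtrsim> |x|^-e for every e > 0 with e \<ge> b; this pins \<theta>2 to the fast rate and rules out b \<le> 0.
  In the critical case a = b the potential beats |x|^-a by a logarithmic factor, so neither
  side holds for a power-decaying solution.
\<close>

section \<open>Annuli and dyadic decompositions\<close>

lemma emeasure_ball_0:
  assumes "r \<ge> 0"
  shows "emeasure lborel (ball (0::real^'n::finite) r) = ennreal (unit_ball_vol (real CARD('n)) * r ^ CARD('n))"
  using emeasure_ball[OF assms, where c="0::real^'n"] by simp

lemma emeasure_annulus:
  assumes "0 \<le> r" "r \<le> r'"
  shows "emeasure lborel (ball (0::real^'n::finite) r' - ball 0 r)
    = ennreal (unit_ball_vol (real CARD('n)) * (r' ^ CARD('n) - r ^ CARD('n)))"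
proof -
  have "emeasure lborel (ball (0::real^'n) r' - ball 0 r) = emeasure lborel (ball (0::real^'n) r') - emeasure lborel (ball (0::real^'n) r)"
    using assms by (intro emeasure_Diff) (auto simp: emeasure_ball_0)
  also have "\<dots> = ennreal (unit_ball_vol (real CARD('n)) * (r' ^ CARD('n) - r ^ CARD('n)))"
    using assms by (simp add: emeasure_ball_0 ennreal_minus right_diff_distrib)
  finally show ?thesis .
qed

lemma emeasure_annulus_pos:
  assumes "0 \<le> r" "r < r'"
  shows "emeasure lborel (ball (0::real^'n::finite) r' - ball 0 r) > 0"
proof -
  have "r ^ CARD('n) < r' ^ CARD('n)" using assms by (intro power_strict_mono) auto
  thus ?thesis using assms by (simp add: emeasure_annulus)
qed

lemma nn_integral_annulus_ge:
  fixes g :: "real^'n::finite \<Rightarrow> real"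
  assumes "0 \<le> r" "r \<le> r'" "m \<ge> 0"
    and "\<And>y. r \<le> norm y \<Longrightarrow> norm y < r' \<Longrightarrow> m \<le> g y"
  shows "ennreal (m * (unit_ball_vol (real CARD('n)) * (r' ^ CARD('n) - r ^ CARD('n))))
    \<le> (\<integral>\<^sup>+y\<in>ball 0 r' - ball 0 r. ennreal (g y) \<partial>lborel)"
proof -
  have "ennreal (m * (unit_ball_vol (real CARD('n)) * (r' ^ CARD('n) - r ^ CARD('n))))
      = ennreal m * emeasure lborel (ball (0::real^'n) r' - ball 0 r)"
    using assms by (simp add: emeasure_annulus ennreal_mult)
  also have "\<dots> = (\<integral>\<^sup>+y. ennreal m * indicator (ball (0::real^'n) r' - ball 0 r) y \<partial>lborel)"
    by (rule nn_integral_cmult_indicator[symmetric]) auto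
  also have "\<dots> \<le> (\<integral>\<^sup>+y\<in>ball 0 r' - ball 0 r. ennreal (g y) \<partial>lborel)"
    using assms(4) by (intro nn_integral_mono)
      (auto split: split_indicator simp: dist_norm not_less intro!: ennreal_leI)
  finally show ?thesis .
qed

lemma nn_integral_annulus_le:
  fixes g :: "real^'n::finite \<Rightarrow> real"
  assumes "0 \<le> r" "r \<le> r'" "M \<ge> 0"
    and "\<And>y. r \<le> norm y \<Longrightarrow> norm y < r' \<Longrightarrow> g y \<le> M"
  shows "(\<integral>\<^sup>+y\<in>ball 0 r' - ball 0 r. ennreal (g y) \<partial>lborel)
    \<le> ennreal (M * (unit_ball_vol (real CARD('n)) * r' ^ CARD('n)))"
proof -
  have "(\<integral>\<^sup>+y\<in>ball 0 r' - ball 0 r. ennreal (g y) \<partial>lborel)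
      \<le> (\<integral>\<^sup>+y. ennreal M * indicator (ball (0::real^'n) r') y \<partial>lborel)"
    using assms(4) by (intro nn_integral_mono)
      (auto split: split_indicator simp: dist_norm not_less intro!: ennreal_leI)
  also have "\<dots> = ennreal M * emeasure lborel (ball (0::real^'n) r')"
    by (rule nn_integral_cmult_indicator) auto
  also have "\<dots> = ennreal (M * (unit_ball_vol (real CARD('n)) * r' ^ CARD('n)))"
    using assms by (simp add: emeasure_ball_0 ennreal_mult)
  finally show ?thesis .
qed

lemma nn_integral_dyadic_annuli:
  fixes g :: "real^'n::finite \<Rightarrow> ennreal"
  assumes g[measurable]: "g \<in> borel_measurable borel" and R: "R > 0"
  shows "(\<integral>\<^sup>+y\<in>ball 0 (2^N*R) - ball 0 R. g y \<partial>lborel) =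
         (\<Sum>j<N. \<integral>\<^sup>+y\<in>ball 0 (2^Suc j*R) - ball 0 (2^j*R). g y \<partial>lborel)"
proof (induction N)
  case 0
  thus ?case by simp
next
  case (Suc N)
  have "ball (0::real^'n) (2^N*R) \<subseteq> ball 0 (2^Suc N*R)" "ball (0::real^'n) R \<subseteq> ball 0 (2^N*R)"
    using R by (intro subset_ball; simp)+
  hence split: "ball (0::real^'n) (2^Suc N*R) - ball 0 R =
     (ball 0 (2^N*R) - ball 0 R) \<union> (ball 0 (2^Suc N*R) - ball 0 (2^N*R))"
    by blast
  have "(\<integral>\<^sup>+y\<in>ball 0 (2^Suc N*R) - ball 0 R. g y \<partial>lborel) =
     (\<integral>\<^sup>+y\<in>ball 0 (2^N*R) - ball 0 R. g y \<partial>lborel)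
       + (\<integral>\<^sup>+y\<in>ball 0 (2^Suc N*R) - ball 0 (2^N*R). g y \<partial>lborel)"
    unfolding split by (rule nn_integral_disjoint_pair) auto
  thus ?case using Suc by simp
qed

lemma dyadic_annulus_mass_ge:
  fixes R k c :: real and j :: nat
  assumes R: "R > 0" and c: "c > 0" and k: "0 \<le> k" "k \<le> real CARD('n::finite)"
  shows "c * (unit_ball_vol (real CARD('n)) * (2 * R) powr (-k) * R ^ CARD('n) * (2 ^ CARD('n) - 1))
     \<le> c * (2^Suc j * R) powr (-k)
         * (unit_ball_vol (real CARD('n)) * ((2^Suc j * R) ^ CARD('n) - (2^j * R) ^ CARD('n)))"
proof -
  define A :: real where "A = 2^j"
  define m where "m = c * (unit_ball_vol (real CARD('n)) * (2 * R) powr (-k) * R ^ CARD('n) * (2 ^ CARD('n) - 1))"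
  have A: "A \<ge> 1" by (simp add: A_def)
  have m: "0 \<le> m"
    using c R by (auto simp: m_def one_le_power intro!: mult_nonneg_nonneg)
  have "(2^Suc j * R) powr (-k) = A powr (-k) * (2*R) powr (-k)"
    using R A by (simp add: A_def powr_mult[symmetric] mult_ac)
  moreover have "(2^Suc j * R) ^ CARD('n) - (2^j * R) ^ CARD('n) = A ^ CARD('n) * (R ^ CARD('n) * (2 ^ CARD('n) - 1))"
    by (simp add: A_def power_mult_distrib algebra_simps)
  moreover have "A powr (-k) * A ^ CARD('n) = A powr (real CARD('n) - k)"
    using A by (simp add: powr_realpow[symmetric] powr_add[symmetric])
  ultimately have eq: "c * (2^Suc j * R) powr (-k)
         * (unit_ball_vol (real CARD('n)) * ((2^Suc j * R) ^ CARD('n) - (2^j * R) ^ CARD('n)))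
      = m * A powr (real CARD('n) - k)"
    by (simp add: m_def mult_ac)
  have "A powr (real CARD('n) - k) \<ge> 1" using A k by (intro ge_one_powr_ge_zero) auto
  hence "m \<le> m * A powr (real CARD('n) - k)" using mult_left_mono[of 1 _ m] m by simp
  thus ?thesis unfolding eq by (simp only: m_def)
qed

lemma dyadic_annulus_mass_eq:
  fixes R k C :: real and j :: nat
  assumes R: "R > 0"
  shows "C * (2^j*R) powr (-k) * (unit_ball_vol (real CARD('n::finite)) * (2^Suc j*R) ^ CARD('n))
       = (C * unit_ball_vol (real CARD('n)) * (2*R) ^ CARD('n) * R powr (-k)) * (2 powr (real CARD('n) - k)) ^ j"
proof -
  define A :: real where "A = 2^j"
  have A: "A \<ge> 1" by (simp add: A_def)
  have "(2^j*R) powr (-k) = A powr (-k) * R powr (-k)"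
    using R A by (simp add: A_def powr_mult)
  moreover have "(2^Suc j*R) ^ CARD('n) = A ^ CARD('n) * (2*R) ^ CARD('n)"
    by (simp add: A_def power_mult_distrib algebra_simps)
  moreover have "A powr (-k) * A ^ CARD('n) = (2 powr (real CARD('n) - k)) ^ j"
  proof -
    have "A = 2 powr (real j)" by (simp add: A_def powr_realpow)
    hence "A powr (-k) * A ^ CARD('n) = 2 powr (real j * (real CARD('n) - k))"
      using A by (simp add: powr_realpow[symmetric] powr_add[symmetric] powr_powr right_diff_distrib)
    also have "\<dots> = (2 powr (real CARD('n) - k)) ^ j" by (simp add: powr_power)
    finally show ?thesis .
  qed
  ultimately show ?thesis by (simp add: mult_ac)
qed

lemma nn_integral_dyadic_annuli_ge:
  fixes g :: "real^'n::finite \<Rightarrow> real"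
  assumes g: "g \<in> borel_measurable borel" and R: "R > 0" and c: "c > 0"
    and k: "0 \<le> k" "k \<le> real CARD('n)"
    and low: "\<And>y. R \<le> norm y \<Longrightarrow> c * norm y powr (-k) \<le> g y"
  shows "ennreal (real N * (c * (unit_ball_vol (real CARD('n)) * (2 * R) powr (-k) * R ^ CARD('n) * (2 ^ CARD('n) - 1))))
     \<le> (\<integral>\<^sup>+y\<in>ball 0 (2^N*R) - ball 0 R. ennreal (g y) \<partial>lborel)"
proof -
  define \<delta> where "\<delta> = c * (unit_ball_vol (real CARD('n)) * (2 * R) powr (-k) * R ^ CARD('n) * (2 ^ CARD('n) - 1))"
  have \<delta>: "\<delta> \<ge> 0" unfolding \<delta>_def using c R by (intro mult_nonneg_nonneg) (auto simp: one_le_power)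
  have annulus: "ennreal \<delta> \<le> (\<integral>\<^sup>+y\<in>ball 0 (2^Suc j*R) - ball 0 (2^j*R). ennreal (g y) \<partial>lborel)" for j
  proof -
    have "ennreal \<delta> \<le> ennreal (c * (2^Suc j * R) powr (-k)
        * (unit_ball_vol (real CARD('n)) * ((2^Suc j * R) ^ CARD('n) - (2^j * R) ^ CARD('n))))"
      unfolding \<delta>_def by (intro ennreal_leI dyadic_annulus_mass_ge R c k)
    also have "\<dots> \<le> (\<integral>\<^sup>+y\<in>ball 0 (2^Suc j*R) - ball 0 (2^j*R). ennreal (g y) \<partial>lborel)"
    proof (rule nn_integral_annulus_ge)
      fix y :: "real^'n" assume y: "2^j*R \<le> norm y" "norm y < 2^Suc j*R"
      have "R \<le> 2^j*R" using R by simp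
      hence "c * norm y powr (-k) \<le> g y" using y by (intro low) linarith
      moreover have "(2^Suc j * R) powr (-k) \<le> norm y powr (-k)"
      proof -
        have "0 < 2^j*R" using R by simp
        hence "0 < norm y" using y by linarith
        thus ?thesis using y k by (intro powr_mono2') auto
      qed
      ultimately show "c * (2^Suc j * R) powr (-k) \<le> g y" using c
        by (smt (verit) mult_left_mono)
    qed (use R c in auto)
    finally show ?thesis .
  qed
  have "ennreal (real N * \<delta>) = (\<Sum>j<N. ennreal \<delta>)"
    using \<delta> by (simp add: ennreal_mult ennreal_of_nat_eq_real_of_nat)
  also have "\<dots> \<le> (\<Sum>j<N. \<integral>\<^sup>+y\<in>ball 0 (2^Suc j*R) - ball 0 (2^j*R). ennreal (g y) \<partial>lborel)"
    by (intro sum_mono annulus)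
  also have "\<dots> = (\<integral>\<^sup>+y\<in>ball 0 (2^N*R) - ball 0 R. ennreal (g y) \<partial>lborel)"
    by (rule nn_integral_dyadic_annuli[symmetric]) (use g R in auto)
  finally show ?thesis by (simp add: \<delta>_def)
qed

text \<open>The dyadic annuli contribute a convergent geometric series since k > n.\<close>

lemma nn_integral_dyadic_annuli_le:
  fixes g :: "real^'n::finite \<Rightarrow> real"
  assumes g: "g \<in> borel_measurable borel" and R: "R > 0" and C: "C \<ge> 0"
    and k: "k > real CARD('n)"
    and up: "\<And>y. R \<le> norm y \<Longrightarrow> g y \<le> C * norm y powr (-k)"
  shows "(\<integral>\<^sup>+y\<in>ball 0 (2^N*R) - ball 0 R. ennreal (g y) \<partial>lborel)
      \<le> ennreal ((C * unit_ball_vol (real CARD('n)) * (2*R) ^ CARD('n) * R powr (-k)) / (1 - 2 powr (real CARD('n) - k)))"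
proof -
  define K where "K = C * unit_ball_vol (real CARD('n)) * (2*R) ^ CARD('n) * R powr (-k)"
  define Q :: real where "Q = 2 powr (real CARD('n) - k)"
  have K: "K \<ge> 0" using C R by (simp add: K_def)
  have Q0: "Q > 0" by (simp add: Q_def)
  have "2 powr (real CARD('n) - k) < 2 powr 0" using k by (intro powr_less_mono) auto
  hence Q1: "Q < 1" by (simp add: Q_def)
  have k0: "k \<ge> 0" using k by linarith
  have annulus: "(\<integral>\<^sup>+y\<in>ball 0 (2^Suc j*R) - ball 0 (2^j*R). ennreal (g y) \<partial>lborel) \<le> ennreal (K * Q ^ j)" for j
  proof -
    have "(\<integral>\<^sup>+y\<in>ball 0 (2^Suc j*R) - ball 0 (2^j*R). ennreal (g y) \<partial>lborel)
        \<le> ennreal ((C * (2^j*R) powr (-k)) * (unit_ball_vol (real CARD('n)) * (2^Suc j*R) ^ CARD('n)))"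
    proof (rule nn_integral_annulus_le)
      fix y :: "real^'n" assume y: "2^j*R \<le> norm y" "norm y < 2^Suc j*R"
      have "R \<le> 2^j*R" using R by simp
      hence "g y \<le> C * norm y powr (-k)" using y by (intro up) linarith
      moreover have "norm y powr (-k) \<le> (2^j * R) powr (-k)"
        using y R k0 by (intro powr_mono2') auto
      ultimately show "g y \<le> C * (2^j * R) powr (-k)" using C
        by (smt (verit) mult_left_mono)
    qed (use R C in auto)
    also have "\<dots> = ennreal (K * Q ^ j)"
      using dyadic_annulus_mass_eq[OF R, where C=C and k=k and j=j and 'n='n] by (simp only: K_def Q_def mult.assoc)
    finally show ?thesis .
  qed
  have "(\<integral>\<^sup>+y\<in>ball 0 (2^N*R) - ball 0 R. ennreal (g y) \<partial>lborel)
      = (\<Sum>j<N. \<integral>\<^sup>+y\<in>ball 0 (2^Suc j*R) - ball 0 (2^j*R). ennreal (g y) \<partial>lborel)"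
    by (rule nn_integral_dyadic_annuli) (use g R in auto)
  also have "\<dots> \<le> (\<Sum>j<N. ennreal (K * Q ^ j))" by (intro sum_mono annulus)
  also have "\<dots> = ennreal (\<Sum>j<N. K * Q ^ j)" using K Q0 by (subst sum_ennreal) auto
  also have "(\<Sum>j<N. K * Q ^ j) = K * ((1 - Q ^ N) / (1 - Q))"
    using Q1 by (simp add: sum_distrib_left[symmetric] sum_gp_strict)
  also have "\<dots> \<le> K / (1 - Q)"
  proof -
    have "(1 - Q ^ N) / (1 - Q) \<le> 1 / (1 - Q)"
      using Q0 Q1 by (intro divide_right_mono) auto
    thus ?thesis using K by (metis mult_left_mono times_divide_eq_right mult_1_right)
  qed
  finally show ?thesis by (simp add: ennreal_leI K_def Q_def)
qed

lemma nn_integral_outside_ball_le: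
  fixes g :: "real^'n::finite \<Rightarrow> real"
  assumes g: "g \<in> borel_measurable borel" and R: "R > 0" and C: "C \<ge> 0"
    and k: "k > real CARD('n)"
    and up: "\<And>y. R \<le> norm y \<Longrightarrow> g y \<le> C * norm y powr (-k)"
  shows "(\<integral>\<^sup>+y\<in>{y. R \<le> norm y}. ennreal (g y) \<partial>lborel)
      \<le> ennreal ((C * unit_ball_vol (real CARD('n)) * (2*R) ^ CARD('n) * R powr (-k)) / (1 - 2 powr (real CARD('n) - k)))"
proof -
  define f where "f N y = ennreal (g y) * indicator (ball 0 (2^N*R) - ball 0 R) y" for N y
  have inc: "incseq f"
  proof (rule incseq_SucI, rule le_funI)
    fix N y
    have "ball (0::real^'n) (2^N*R) \<subseteq> ball 0 (2^Suc N*R)" using R by (intro subset_ball) auto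
    thus "f N y \<le> f (Suc N) y" unfolding f_def by (auto split: split_indicator)
  qed
  have meas: "f N \<in> borel_measurable lborel" for N
    unfolding f_def using g by (intro borel_measurable_times_ennreal borel_measurable_indicator) auto
  have exhaust: "ennreal (g y) * indicator {y. R \<le> norm y} y \<le> (SUP N. f N y)" for y
  proof (cases "R \<le> norm y")
    case True
    obtain N where "norm y / R < 2 ^ N" using real_arch_pow[of 2 "norm y / R"] by auto
    hence "norm y < 2^N * R" using R by (simp add: field_simps)
    hence "f N y = ennreal (g y)" using True by (simp add: f_def dist_norm)
    hence "ennreal (g y) \<le> (SUP N. f N y)" by (metis SUP_upper UNIV_I)
    thus ?thesis using True by simp
  qed simp
  have "(\<integral>\<^sup>+y\<in>{y. R \<le> norm y}. ennreal (g y) \<partial>lborel) \<le> (\<integral>\<^sup>+y. (SUP N. f N y) \<partial>lborel)"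
    by (intro nn_integral_mono exhaust)
  also have "\<dots> = (SUP N. \<integral>\<^sup>+y. f N y \<partial>lborel)"
    by (rule nn_integral_monotone_convergence_SUP[OF inc meas])
  also have "\<dots> \<le> ennreal ((C * unit_ball_vol (real CARD('n)) * (2*R) ^ CARD('n) * R powr (-k)) / (1 - 2 powr (real CARD('n) - k)))"
    unfolding f_def by (intro SUP_least nn_integral_dyadic_annuli_le[OF g R C k up])
  finally show ?thesis .
qed

section \<open>Lower bounds for Wolff potentials\<close>

lemma nn_integral_powr_tail:
  fixes T e :: real
  assumes "T > 0" "e > 0"
  shows "(\<integral>\<^sup>+t. ennreal (indicator {T..} t * t powr (-e-1)) \<partial>lborel) = ennreal (T powr (-e) / e)"
proof -
  have "((\<lambda>t. t powr (-e-1)) has_integral -(T powr (-e-1+1)) / (-e-1+1)) {T..}"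
    using assms by (intro has_integral_powr_to_inf) auto
  hence h: "((\<lambda>t. t powr (-e-1)) has_integral (T powr (-e) / e)) {T..}" by simp
  have "integral\<^sup>N lborel (\<lambda>t. indicator {T..} t * t powr (-e-1)) = T powr (-e) / e"
    by (rule nn_integral_has_integral_lebesgue[OF _ h]) auto
  thus ?thesis by simp
qed

lemma wolff_integrand_ge:
  fixes C t d e m J :: real
  assumes g: "\<gamma> > 1" and C: "C > 0" and t: "t > 0"
    and e: "e = (m - d) / (\<gamma> - 1)" and le: "C * t powr d \<le> J"
  shows "C powr (1/(\<gamma>-1)) * t powr (-e-1) \<le> (J / t powr m) powr (1 / (\<gamma> - 1)) / t"
proof -
  have ex: "(d - m) / (\<gamma> - 1) = -e" using g by (simp add: e field_simps)
  have "C * t powr d / t powr m = C * t powr (d - m)" using t by (simp add: powr_diff)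
  also have "\<dots> powr (1 / (\<gamma> - 1)) = C powr (1/(\<gamma>-1)) * t powr (-e)"
    using t C by (simp add: powr_mult powr_powr ex)
  finally have "C powr (1/(\<gamma>-1)) * t powr (-e-1) = (C * t powr d / t powr m) powr (1 / (\<gamma> - 1)) / t"
    using t by (simp add: powr_diff)
  also have "\<dots> \<le> (J / t powr m) powr (1 / (\<gamma> - 1)) / t"
    using le t C g by (intro divide_right_mono powr_mono2) auto
  finally show ?thesis .
qed

lemma wolff_ge_of_ball_integral_ge:
  fixes f :: "real^'n::finite \<Rightarrow> real" and x :: "real^'n"
  assumes g: "\<gamma> > 1" and C: "C > 0" and T: "T > 0"
    and e: "e = (real CARD('n) - \<beta> * \<gamma> - d) / (\<gamma> - 1)" and epos: "e > 0"
    and I: "\<And>t. t \<ge> T \<Longrightarrow> ennreal (C * t powr d) \<le> (\<integral>\<^sup>+y\<in>ball x t. ennreal (f y) \<partial>lborel)"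
  shows "ennreal (C powr (1/(\<gamma>-1)) * (T powr (-e) / e)) \<le> wolff \<beta> \<gamma> f x"
proof -
  define K where "K = C powr (1/(\<gamma>-1))"
  have Kpos: "K > 0" using C by (simp add: K_def)
  have pt: "ennreal (indicator {T..} t * (K * t powr (-e-1))) \<le>
     (let I = (\<integral>\<^sup>+ y \<in> ball x t. ennreal (f y) \<partial>lborel) in
         if I = \<infinity> then \<infinity>
         else ennreal ((enn2real I / t powr (real CARD('n) - \<beta> * \<gamma>)) powr (1 / (\<gamma> - 1)) / t)) * indicator {0<..} t" for t
  proof (cases "t \<ge> T")
    case False thus ?thesis by simp
  next
    case True
    hence t0: "t > 0" using T by simp
    define J where "J = (\<integral>\<^sup>+ y \<in> ball x t. ennreal (f y) \<partial>lborel)"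
    have CJ: "ennreal (C * t powr d) \<le> J" using I[OF True] by (simp add: J_def)
    show ?thesis
    proof (cases "J = \<infinity>")
      case True thus ?thesis using t0 by (simp add: J_def[symmetric] Let_def)
    next
      case False
      have le: "C * t powr d \<le> enn2real J"
      proof -
        have "J = ennreal (enn2real J)" using False by (simp add: less_top)
        hence "ennreal (C * t powr d) \<le> ennreal (enn2real J)" using CJ by simp
        thus ?thesis by (subst (asm) ennreal_le_iff) auto
      qed
      have "K * t powr (-e-1) \<le> (enn2real J / t powr (real CARD('n) - \<beta> * \<gamma>)) powr (1 / (\<gamma> - 1)) / t"
        unfolding K_def by (rule wolff_integrand_ge[OF g C t0 e le])
      thus ?thesis using True t0 False by (simp add: J_def[symmetric] Let_def)
    qed
  qed
  have "ennreal (K * (T powr (-e) / e)) = (\<integral>\<^sup>+t. ennreal (indicator {T..} t * (K * t powr (-e-1))) \<partial>lborel)"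
  proof -
    have "(\<integral>\<^sup>+t. ennreal (indicator {T..} t * (K * t powr (-e-1))) \<partial>lborel)
        = (\<integral>\<^sup>+t. ennreal K * ennreal (indicator {T..} t * t powr (-e-1)) \<partial>lborel)"
      using Kpos by (intro nn_integral_cong) (simp add: ennreal_mult'[symmetric] mult.assoc mult.left_commute)
    also have "\<dots> = ennreal K * ennreal (T powr (-e) / e)"
      by (subst nn_integral_cmult) (auto simp: nn_integral_powr_tail[OF T epos])
    also have "\<dots> = ennreal (K * (T powr (-e) / e))"
      using Kpos T epos by (subst ennreal_mult) auto
    finally show ?thesis by simp
  qed
  also have "\<dots> \<le> wolff \<beta> \<gamma> f x"
    unfolding wolff_def by (intro nn_integral_mono pt)
  finally show ?thesis by (simp add: K_def)
qed

lemma wolff_ge_of_far_ball_integral_ge: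
  fixes f :: "real^'n::finite \<Rightarrow> real" and x :: "real^'n"
  assumes g: "\<gamma> > 1" and C: "C > 0" and M: "M > 0" and x: "x \<noteq> 0"
    and e: "e = (real CARD('n) - \<beta> * \<gamma> - d) / (\<gamma> - 1)" and epos: "e > 0"
    and I: "\<And>t. M * norm x \<le> t \<Longrightarrow> ennreal (C * t powr d) \<le> (\<integral>\<^sup>+y\<in>ball x t. ennreal (f y) \<partial>lborel)"
  shows "ennreal (C powr (1/(\<gamma>-1)) * (M powr (-e) / e) * norm x powr (-e)) \<le> wolff \<beta> \<gamma> f x"
proof -
  have T: "M * norm x > 0" using M x by simp
  have "C powr (1/(\<gamma>-1)) * (M powr (-e) / e) * norm x powr (-e)
      = C powr (1/(\<gamma>-1)) * ((M * norm x) powr (-e) / e)"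
    using M by (simp add: powr_mult)
  also have "ennreal \<dots> \<le> wolff \<beta> \<gamma> f x"
    by (rule wolff_ge_of_ball_integral_ge[OF g C T e epos I])
  finally show ?thesis .
qed

lemma wolff_ge_fast_decay:
  fixes f :: "real^'n::finite \<Rightarrow> real"
  assumes g: "\<gamma> > 1" and nb: "\<beta> * \<gamma> < real CARD('n)"
    and mass: "0 < (\<integral>\<^sup>+y\<in>ball 0 1. ennreal (f y) \<partial>lborel)"
  shows "\<exists>K>0. \<forall>x. norm x \<ge> 1 \<longrightarrow>
     ennreal (K * norm x powr (-((real CARD('n) - \<beta> * \<gamma>) / (\<gamma> - 1)))) \<le> wolff \<beta> \<gamma> f x"
proof -
  define a where "a = (real CARD('n) - \<beta> * \<gamma>) / (\<gamma> - 1)"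
  have a: "a > 0" using g nb by (simp add: a_def)
  obtain C where C: "C > 0" "ennreal C \<le> (\<integral>\<^sup>+y\<in>ball 0 1. ennreal (f y) \<partial>lborel)"
  proof (cases "\<integral>\<^sup>+y\<in>ball 0 1. ennreal (f y) \<partial>lborel")
    case (real r)
    thus ?thesis using mass that[of r] by auto
  qed (use that[of 1] in simp)
  have "ennreal (C powr (1/(\<gamma>-1)) * (2 powr (-a) / a) * norm x powr (-a)) \<le> wolff \<beta> \<gamma> f x"
    if x: "norm x \<ge> 1" for x :: "real^'n"
  proof (rule wolff_ge_of_far_ball_integral_ge[OF g C(1) _ _ _ a])
    fix t assume t: "2 * norm x \<le> t"
    hence "norm x + 1 \<le> t" using x by linarith
    hence "ball 0 1 \<subseteq> ball x t" by (simp add: ball_subset_ball_iff dist_norm)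
    hence "(\<integral>\<^sup>+y\<in>ball 0 1. ennreal (f y) \<partial>lborel) \<le> (\<integral>\<^sup>+y\<in>ball x t. ennreal (f y) \<partial>lborel)"
      by (intro nn_integral_mono) (auto split: split_indicator)
    moreover have "t \<noteq> 0" using t x by linarith
    ultimately show "ennreal (C * t powr 0) \<le> (\<integral>\<^sup>+y\<in>ball x t. ennreal (f y) \<partial>lborel)"
      using C(2) by simp
  qed (use x in \<open>auto simp: a_def\<close>)
  moreover have "C powr (1/(\<gamma>-1)) * (2 powr (-a) / a) > 0" using C a by simp
  ultimately show ?thesis unfolding a_def[symmetric] by blast
qed

lemma powr_ge_on_annulus:
  fixes t k r :: real
  assumes "t > 0" "t/4 \<le> r" "r < t/2"
  shows "min (4 powr (-k)) (2 powr (-k)) * t powr k \<le> r powr k"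
proof (cases "k \<ge> 0")
  case True
  have "(t/4) powr k \<le> r powr k" using assms True by (intro powr_mono2) auto
  moreover have "(t/4) powr k = 4 powr (-k) * t powr k" using assms by (simp add: powr_divide powr_minus_divide)
  moreover have "min (4 powr (-k)) (2 powr (-k)) * t powr k \<le> 4 powr (-k) * t powr k"
    by (intro mult_right_mono) auto
  ultimately show ?thesis by linarith
next
  case False
  have "(t/2) powr k \<le> r powr k" using assms False by (intro powr_mono2') auto
  moreover have "(t/2) powr k = 2 powr (-k) * t powr k" using assms by (simp add: powr_divide powr_minus_divide)
  moreover have "min (4 powr (-k)) (2 powr (-k)) * t powr k \<le> 2 powr (-k) * t powr k"
    by (intro mult_right_mono) auto
  ultimately show ?thesis by linarith
qed

lemma wolff_ge_power_decay:
  fixes f :: "real^'n::finite \<Rightarrow> real"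
  assumes g: "\<gamma> > 1" and R: "R > 0" and c: "c > 0" and epos: "e > 0"
    and e: "e = -(k + \<beta> * \<gamma>) / (\<gamma> - 1)"
    and low: "\<And>y. R \<le> norm y \<Longrightarrow> c * norm y powr k \<le> f y"
  shows "\<exists>K>0. \<forall>x. norm x \<ge> R \<longrightarrow> ennreal (K * norm x powr (-e)) \<le> wolff \<beta> \<gamma> f x"
proof -
  define \<mu> where "\<mu> = min (4 powr (-k)) (2 powr (-k))"
  define D :: real where "D = (1/2) ^ CARD('n) - (1/4) ^ CARD('n)"
  define C where "C = c * \<mu> * (unit_ball_vol (real CARD('n)) * D)"
  have D: "D > 0" unfolding D_def by (intro power_strict_mono[THEN diff_gt_0_iff_gt[THEN iffD2]]) auto
  have C: "C > 0" using c D by (simp add: C_def \<mu>_def)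
  have annulus_mass: "ennreal (C * t powr (k + real CARD('n)))
      \<le> (\<integral>\<^sup>+y\<in>ball 0 (t/2) - ball 0 (t/4). ennreal (f y) \<partial>lborel)" if t: "4 * R \<le> t" for t
  proof -
    have t0: "t > 0" using t R by linarith
    have "ennreal ((c * \<mu> * t powr k) * (unit_ball_vol (real CARD('n)) * ((t/2) ^ CARD('n) - (t/4) ^ CARD('n))))
        \<le> (\<integral>\<^sup>+y\<in>ball 0 (t/2) - ball 0 (t/4). ennreal (f y) \<partial>lborel)"
    proof (rule nn_integral_annulus_ge)
      fix y :: "real^'n" assume y: "t/4 \<le> norm y" "norm y < t/2"
      have "c * norm y powr k \<le> f y" using y t by (intro low) linarith
      moreover have "\<mu> * t powr k \<le> norm y powr k"
        unfolding \<mu>_def by (rule powr_ge_on_annulus) (use t0 y in auto)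
      ultimately show "c * \<mu> * t powr k \<le> f y" using c by (smt (verit) mult.assoc mult_left_mono)
    qed (use t0 c in \<open>auto simp: \<mu>_def\<close>)
    moreover have "(t/2) ^ CARD('n) - (t/4) ^ CARD('n) = t ^ CARD('n) * D"
      by (simp add: D_def power_divide field_simps)
    moreover have "t powr (k + real CARD('n)) = t powr k * t ^ CARD('n)"
      using t0 by (simp add: powr_add powr_realpow)
    ultimately show ?thesis by (simp add: C_def mult_ac)
  qed
  have "ennreal (C powr (1/(\<gamma>-1)) * (4 powr (-e) / e) * norm x powr (-e)) \<le> wolff \<beta> \<gamma> f x"
    if x: "norm x \<ge> R" for x :: "real^'n"
  proof (rule wolff_ge_of_far_ball_integral_ge[OF g C _ _ _ epos])
    fix t assume t: "4 * norm x \<le> t"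
    hence "norm x + t/2 \<le> t" using norm_ge_zero[of x] by linarith
    hence "ball 0 (t/2) \<subseteq> ball x t" by (simp add: ball_subset_ball_iff dist_norm)
    hence "ball 0 (t/2) - ball 0 (t/4) \<subseteq> ball x t" by blast
    hence "(\<integral>\<^sup>+y\<in>ball 0 (t/2) - ball 0 (t/4). ennreal (f y) \<partial>lborel) \<le> (\<integral>\<^sup>+y\<in>ball x t. ennreal (f y) \<partial>lborel)"
      by (intro nn_integral_mono) (auto split: split_indicator)
    moreover have "4 * R \<le> t" using t x by linarith
    ultimately show "ennreal (C * t powr (k + real CARD('n))) \<le> (\<integral>\<^sup>+y\<in>ball x t. ennreal (f y) \<partial>lborel)"
      using annulus_mass by (blast intro: order_trans)
  qed (use x R e in \<open>auto simp: field_simps\<close>)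
  moreover have "C powr (1/(\<gamma>-1)) * (4 powr (-e) / e) > 0" using C epos by simp
  ultimately show ?thesis by blast
qed

text \<open>Since f \<gtrsim> |y|^-n, each dyadic annulus carries mass \<gtrsim> 1, so the balls of radius
  \<approx> 2^N R carry mass \<gtrsim> N: this logarithmic growth is what separates the critical case.\<close>

lemma wolff_ge_critical:
  fixes f :: "real^'n::finite \<Rightarrow> real"
  assumes g: "\<gamma> > 1" and nb: "\<beta> * \<gamma> < real CARD('n)" and R: "R > 0" and c: "c > 0"
    and fm: "f \<in> borel_measurable borel"
    and low: "\<And>y. R \<le> norm y \<Longrightarrow> c * norm y powr (-real CARD('n)) \<le> f y"
  shows "\<exists>R'. \<forall>x. R' \<le> norm x \<longrightarrow>
     ennreal (M * norm x powr (-((real CARD('n) - \<beta> * \<gamma>) / (\<gamma> - 1)))) \<le> wolff \<beta> \<gamma> f x"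
proof -
  define a where "a = (real CARD('n) - \<beta> * \<gamma>) / (\<gamma> - 1)"
  have a: "a > 0" using g nb by (simp add: a_def)
  define \<delta> where "\<delta> = c * (unit_ball_vol (real CARD('n)) * (2 * R) powr (-real CARD('n)) * R ^ CARD('n) * (2 ^ CARD('n) - 1))"
  have "(2::real) ^ CARD('n) \<ge> 2 ^ 1" by (intro power_increasing) auto
  hence \<delta>: "\<delta> > 0" unfolding \<delta>_def using c R by (intro mult_pos_pos) auto
  have "filterlim (\<lambda>N::nat. (real N * \<delta>) powr (1/(\<gamma>-1)) * (2 powr (-a) / a)) at_top sequentially"
    using g a \<delta> by real_asymp
  hence "\<forall>\<^sub>F N in sequentially. M \<le> (real N * \<delta>) powr (1/(\<gamma>-1)) * (2 powr (-a) / a)"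
    by (simp add: filterlim_at_top)
  moreover have "\<forall>\<^sub>F N in sequentially. 1 \<le> N" by (rule eventually_ge_at_top)
  ultimately have "\<forall>\<^sub>F N in sequentially. M \<le> (real N * \<delta>) powr (1/(\<gamma>-1)) * (2 powr (-a) / a) \<and> 1 \<le> N"
    by (rule eventually_conj)
  then obtain N0 where N0: "\<And>n. N0 \<le> n \<Longrightarrow> M \<le> (real n * \<delta>) powr (1/(\<gamma>-1)) * (2 powr (-a) / a) \<and> 1 \<le> n"
    by (auto simp: eventually_sequentially)
  define N where "N = N0"
  have N: "M \<le> (real N * \<delta>) powr (1/(\<gamma>-1)) * (2 powr (-a) / a)" and N1: "1 \<le> N"
    using N0[of N0] by (simp_all add: N_def)
  have "ennreal (M * norm x powr (-a)) \<le> wolff \<beta> \<gamma> f x" if x: "2^N * R \<le> norm x" for x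
  proof -
    have "0 < 2^N * R" using R by simp
    hence x0: "x \<noteq> 0" using x by auto
    have "ennreal (M * norm x powr (-a))
        \<le> ennreal ((real N * \<delta>) powr (1/(\<gamma>-1)) * (2 powr (-a) / a) * norm x powr (-a))"
      using N by (intro ennreal_leI mult_right_mono) auto
    also have "\<dots> \<le> wolff \<beta> \<gamma> f x"
    proof (rule wolff_ge_of_far_ball_integral_ge[OF g _ _ x0 _ a, where d=0])
      fix t assume t: "2 * norm x \<le> t"
      hence "norm x + 2^N*R \<le> t" using x by linarith
      hence "ball 0 (2^N*R) \<subseteq> ball x t" by (simp add: ball_subset_ball_iff dist_norm)
      hence "ball 0 (2^N*R) - ball 0 R \<subseteq> ball x t" by blast
      hence "(\<integral>\<^sup>+y\<in>ball 0 (2^N*R) - ball 0 R. ennreal (f y) \<partial>lborel) \<le> (\<integral>\<^sup>+y\<in>ball x t. ennreal (f y) \<partial>lborel)"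
        by (intro nn_integral_mono) (auto split: split_indicator)
      moreover have "ennreal (real N * \<delta>) \<le> (\<integral>\<^sup>+y\<in>ball 0 (2^N*R) - ball 0 R. ennreal (f y) \<partial>lborel)"
        unfolding \<delta>_def by (rule nn_integral_dyadic_annuli_ge[OF fm R c _ _ low]) auto
      moreover have "t \<noteq> 0" using t x0 by auto
      ultimately show "ennreal (real N * \<delta> * t powr 0) \<le> (\<integral>\<^sup>+y\<in>ball x t. ennreal (f y) \<partial>lborel)"
        by simp
    qed (use N1 \<delta> in \<open>auto simp: a_def\<close>)
    finally show ?thesis .
  qed
  thus ?thesis unfolding a_def by blast
qed

section \<open>Integrability of power-decaying functions\<close>

lemma powr_le_decay_powr:
  fixes a C r s \<theta> :: real
  assumes "0 \<le> a" "a \<le> C * r powr (-\<theta>)" "r > 0" "s \<ge> 0" "C \<ge> 0"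
  shows "a powr s \<le> C powr s * r powr (-(s*\<theta>))"
proof -
  have "a powr s \<le> (C * r powr (-\<theta>)) powr s" using assms by (intro powr_mono2) auto
  also have "\<dots> = C powr s * r powr (-(s*\<theta>))"
    using assms by (simp add: powr_mult powr_powr mult.commute)
  finally show ?thesis .
qed

lemma decay_powr_le_powr:
  fixes a c r s \<theta> :: real
  assumes "c * r powr (-\<theta>) \<le> a" "r > 0" "s \<ge> 0" "c \<ge> 0"
  shows "c powr s * r powr (-(s*\<theta>)) \<le> a powr s"
proof -
  have "c powr s * r powr (-(s*\<theta>)) = (c * r powr (-\<theta>)) powr s"
    using assms by (simp add: powr_mult powr_powr mult.commute)
  also have "\<dots> \<le> a powr s" using assms by (intro powr_mono2) auto
  finally show ?thesis .
qed

lemma integrable_powr_of_decay: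
  fixes f :: "real^'n::finite \<Rightarrow> real"
  assumes f[measurable]: "f \<in> borel_measurable borel" and M: "\<And>x. \<bar>f x\<bar> \<le> M"
    and R: "R > 0" and C: "C \<ge> 0"
    and up: "\<And>x. R \<le> norm x \<Longrightarrow> \<bar>f x\<bar> \<le> C * norm x powr (-\<theta>)"
    and s: "s > 0" and st: "s * \<theta> > real CARD('n)"
  shows "integrable lborel (\<lambda>x. \<bar>f x\<bar> powr s)"
proof (rule integrableI_bounded)
  show "(\<lambda>x. \<bar>f x\<bar> powr s) \<in> borel_measurable lborel" by measurable
  have M0: "M \<ge> 0" using M[of 0] by linarith
  define g where "g y = C powr s * norm y powr (-(s*\<theta>))" for y :: "real^'n"
  have gm[measurable]: "g \<in> borel_measurable borel" unfolding g_def by measurable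
  have pt: "ennreal (norm (\<bar>f x\<bar> powr s)) \<le> ennreal (M powr s) * indicator (ball 0 R) x + ennreal (g x) * indicator {y. R \<le> norm y} x" for x
  proof (cases "R \<le> norm x")
    case True
    have "\<bar>f x\<bar> powr s \<le> g x" unfolding g_def
      by (rule powr_le_decay_powr) (use True R s C up in auto)
    thus ?thesis using True by (auto simp: dist_norm intro!: ennreal_leI)
  next
    case False
    have "\<bar>f x\<bar> powr s \<le> M powr s" using M s by (intro powr_mono2) auto
    thus ?thesis using False by (auto simp: dist_norm intro!: ennreal_leI)
  qed
  have "(\<integral>\<^sup>+x. ennreal (norm (\<bar>f x\<bar> powr s)) \<partial>lborel) \<le>
     (\<integral>\<^sup>+x. ennreal (M powr s) * indicator (ball 0 R) x + ennreal (g x) * indicator {y. R \<le> norm y} x \<partial>lborel)"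
    by (rule nn_integral_mono) (rule pt)
  also have "\<dots> = (\<integral>\<^sup>+x. ennreal (M powr s) * indicator (ball (0::real^'n) R) x \<partial>lborel) + (\<integral>\<^sup>+x\<in>{y. R \<le> norm y}. ennreal (g x) \<partial>lborel)"
  proof -
    have "{y::real^'n. R \<le> norm y} \<in> sets lborel"
      using closed_Collect_le[of "\<lambda>y. R" "\<lambda>y::real^'n. norm y"] by (auto intro: borel_closed continuous_intros)
    thus ?thesis using gm by (intro nn_integral_add borel_measurable_times_ennreal borel_measurable_indicator) auto
  qed
  finally have A12: "(\<integral>\<^sup>+x. ennreal (norm (\<bar>f x\<bar> powr s)) \<partial>lborel) \<le> (\<integral>\<^sup>+x. ennreal (M powr s) * indicator (ball (0::real^'n) R) x \<partial>lborel) + (\<integral>\<^sup>+x\<in>{y. R \<le> norm y}. ennreal (g x) \<partial>lborel)" .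
  have "(\<integral>\<^sup>+x. ennreal (M powr s) * indicator (ball (0::real^'n) R) x \<partial>lborel) = ennreal (M powr s) * emeasure lborel (ball (0::real^'n) R)"
    by (rule nn_integral_cmult_indicator) auto
  also have "\<dots> < \<infinity>" using R by (simp add: emeasure_ball_0 ennreal_mult_less_top)
  finally have A3: "(\<integral>\<^sup>+x. ennreal (M powr s) * indicator (ball (0::real^'n) R) x \<partial>lborel) < \<infinity>" .
  have A4: "(\<integral>\<^sup>+x\<in>{y. R \<le> norm y}. ennreal (g x) \<partial>lborel) < \<infinity>"
  proof -
    have "(\<integral>\<^sup>+x\<in>{y. R \<le> norm y}. ennreal (g x) \<partial>lborel) \<le> ennreal ((C powr s * unit_ball_vol (real CARD('n)) * (2*R) ^ CARD('n) * R powr (-(s*\<theta>))) / (1 - 2 powr (real CARD('n) - s*\<theta>)))"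
      by (rule nn_integral_outside_ball_le[OF gm R _ st]) (auto simp: g_def)
    also have "\<dots> < \<infinity>" by simp
    finally show ?thesis .
  qed
  show "(\<integral>\<^sup>+x. ennreal (norm (\<bar>f x\<bar> powr s)) \<partial>lborel) < \<infinity>"
    using A12 A3 A4 by (simp add: ennreal_add_less_top order.strict_trans1 del: norm_powr_real_powr)
qed

lemma not_integrable_powr_of_decay:
  fixes f :: "real^'n::finite \<Rightarrow> real"
  assumes f[measurable]: "f \<in> borel_measurable borel"
    and R: "R > 0" and c: "c > 0"
    and low: "\<And>x. R \<le> norm x \<Longrightarrow> c * norm x powr (-\<theta>) \<le> f x"
    and s: "s > 0" and th: "\<theta> \<ge> 0" and st: "s * \<theta> \<le> real CARD('n)"
  shows "\<not> integrable lborel (\<lambda>x. \<bar>f x\<bar> powr s)"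
proof
  assume int: "integrable lborel (\<lambda>x. \<bar>f x\<bar> powr s)"
  define g where "g x = \<bar>f x\<bar> powr s" for x
  have gm: "g \<in> borel_measurable borel" unfolding g_def by measurable
  have fin: "(\<integral>\<^sup>+x. ennreal (g x) \<partial>lborel) \<noteq> \<infinity>" using integrableD(2)[OF int] by (simp add: g_def)
  then obtain X where X: "(\<integral>\<^sup>+x. ennreal (g x) \<partial>lborel) = ennreal X" "X \<ge> 0"
    using ennreal_cases[of "\<integral>\<^sup>+x. ennreal (g x) \<partial>lborel"] by auto
  define \<delta> where "\<delta> = c powr s * (unit_ball_vol (real CARD('n)) * (2 * R) powr (-(s*\<theta>)) * R ^ CARD('n) * (2 ^ CARD('n) - 1))"
  have "(2::real) ^ CARD('n) \<ge> 2 ^ 1" by (intro power_increasing) auto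
  hence d: "\<delta> > 0" unfolding \<delta>_def using c R by (intro mult_pos_pos) auto
  have "ennreal (real N * \<delta>) \<le> ennreal X" for N
  proof -
    have "ennreal (real N * \<delta>) \<le> (\<integral>\<^sup>+y\<in>ball 0 (2^N*R) - ball 0 R. ennreal (g y) \<partial>lborel)"
      unfolding \<delta>_def
    proof (rule nn_integral_dyadic_annuli_ge[OF gm R])
      fix y :: "real^'n" assume y: "R \<le> norm y"
      have "c powr s * norm y powr (-(s*\<theta>)) \<le> f y powr s"
        by (rule decay_powr_le_powr) (use low[OF y] y R s c in auto)
      also have "f y powr s \<le> g y"
      proof -
        have "0 \<le> f y" using low[OF y] c by (smt (verit) mult_nonneg_nonneg powr_ge_zero)
        thus ?thesis unfolding g_def using s by (intro powr_mono2) auto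
      qed
      finally show "c powr s * norm y powr (-(s*\<theta>)) \<le> g y" .
    qed (use c s th st in auto)
    also have "\<dots> \<le> (\<integral>\<^sup>+x. ennreal (g x) \<partial>lborel)"
      by (intro nn_integral_mono) (auto split: split_indicator)
    finally show ?thesis using X by simp
  qed
  hence le: "real N * \<delta> \<le> X" for N using X(2) by (simp add: ennreal_le_iff)
  obtain N :: nat where "X / \<delta> < real N" using reals_Archimedean2 by blast
  hence "X < real N * \<delta>" using d by (simp add: field_simps)
  thus False using le[of N] by simp
qed

lemma asym_eq_powrD:
  assumes "asym_eq u (\<lambda>x. norm x powr (-\<theta>))"
  obtains c R where "c > 0" "R > 0"
    "\<And>x. R \<le> norm x \<Longrightarrow> u x \<le> c * norm x powr (-\<theta>) \<and> (1/c) * norm x powr (-\<theta>) \<le> u x"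
proof -
  obtain c R where c: "c > 0" and h: "\<And>x. norm x \<ge> R \<Longrightarrow>
      1 / c \<le> u x / norm x powr (-\<theta>) \<and> u x / norm x powr (-\<theta>) \<le> c"
    using assms unfolding asym_eq_def by blast
  have "u x \<le> c * norm x powr (-\<theta>) \<and> (1/c) * norm x powr (-\<theta>) \<le> u x" if x: "max R 1 \<le> norm x" for x
  proof -
    have "x \<noteq> 0" using x by auto
    hence "norm x powr (-\<theta>) > 0" by simp
    with h[of x] x show ?thesis by (simp add: field_simps)
  qed
  thus ?thesis using that[of c "max R 1"] c by simp
qed

lemma integrable_powr_iff_decay:
  fixes f :: "real^'n::finite \<Rightarrow> real"
  assumes f[measurable]: "f \<in> borel_measurable borel" and bdd: "bounded (range f)"
    and decay: "asym_eq f (\<lambda>x. norm x powr (-\<theta>))" and \<theta>: "\<theta> > 0" and X: "X > 0"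
  shows "(\<forall>s > real CARD('n) / X. integrable lborel (\<lambda>x. \<bar>f x\<bar> powr s)) \<longleftrightarrow> X \<le> \<theta>"
proof -
  define n where "n = real CARD('n)"
  have n: "n > 0" by (simp add: n_def)
  obtain c R where c: "c > 0" and R: "R > 0" and bounds:
      "\<And>x. R \<le> norm x \<Longrightarrow> f x \<le> c * norm x powr (-\<theta>) \<and> (1/c) * norm x powr (-\<theta>) \<le> f x"
    using asym_eq_powrD[OF decay] by blast
  show ?thesis
  proof
    assume int: "\<forall>s > real CARD('n) / X. integrable lborel (\<lambda>x. \<bar>f x\<bar> powr s)"
    show "X \<le> \<theta>"
    proof (rule ccontr)
      assume "\<not> X \<le> \<theta>"
      hence lt: "n / X < n / \<theta>" using n \<theta> by (intro divide_strict_left_mono) auto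
      define s where "s = (n / X + n / \<theta>) / 2"
      have "0 < n / X" using n X by simp
      hence s: "n / X < s" "0 < s" "s \<le> n / \<theta>" using lt unfolding s_def by argo+
      hence "s * \<theta> \<le> n" using \<theta> by (simp add: le_divide_eq)
      moreover have "\<And>x. R \<le> norm x \<Longrightarrow> 1/c * norm x powr (-\<theta>) \<le> f x" using bounds by blast
      ultimately have "\<not> integrable lborel (\<lambda>x. \<bar>f x\<bar> powr s)"
        using c \<theta> s(2) by (intro not_integrable_powr_of_decay[OF f R, where c="1/c"]) (simp_all add: n_def)
      moreover have "integrable lborel (\<lambda>x. \<bar>f x\<bar> powr s)" using int s(1) by (simp add: n_def)
      ultimately show False by simp
    qed
  next
    assume "X \<le> \<theta>"
    show "\<forall>s > real CARD('n) / X. integrable lborel (\<lambda>x. \<bar>f x\<bar> powr s)"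
    proof (intro allI impI)
      fix s assume "s > real CARD('n) / X"
      moreover have "n / \<theta> \<le> n / X" using \<open>X \<le> \<theta>\<close> n X by (intro frac_le) auto
      ultimately have "n / \<theta> < s" by (simp add: n_def)
      moreover have "0 < n / \<theta>" using n \<theta> by simp
      ultimately have s: "0 < s" "n < s * \<theta>" using \<theta> by (linarith, simp add: pos_divide_less_eq)
      obtain M where M: "\<And>x. \<bar>f x\<bar> \<le> M" using bdd unfolding bounded_iff by auto
      have "\<bar>f x\<bar> \<le> c * norm x powr (-\<theta>)" if "R \<le> norm x" for x
      proof -
        have "0 \<le> (1/c) * norm x powr (-\<theta>)" using c by simp
        thus ?thesis using bounds[OF that] by linarith
      qed
      thus "integrable lborel (\<lambda>x. \<bar>f x\<bar> powr s)"
        using c s by (intro integrable_powr_of_decay[OF f M R, where C=c]) (simp_all add: n_def)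
    qed
  qed
qed

section \<open>Comparison of decay rates\<close>

lemma AE_imp_ex_in:
  assumes "AE x in lborel. P x" "S \<in> sets lborel" "emeasure lborel S > 0"
  shows "\<exists>x\<in>S. P x"
proof (rule ccontr)
  assume "\<not> ?thesis"
  from assms(1) obtain N where N: "{x \<in> space lborel. \<not> P x} \<subseteq> N" "emeasure lborel N = 0" "N \<in> sets lborel"
    by (rule AE_E)
  have "S \<subseteq> N" using N(1) \<open>\<not> (\<exists>x\<in>S. P x)\<close> by auto
  hence "emeasure lborel S \<le> emeasure lborel N" using N(3) by (intro emeasure_mono)
  thus False using N(2) assms(3) by simp
qed

lemma AE_imp_ex_norm_ge:
  assumes "AE x in lborel. P (x::real^'n::finite)"
  shows "\<exists>x. norm x \<ge> \<rho> \<and> P x"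
proof -
  define r where "r = max \<rho> 1"
  have "\<exists>x\<in>ball (0::real^'n) (2*r) - ball 0 r. P x"
    by (rule AE_imp_ex_in[OF assms]) (auto intro!: emeasure_annulus_pos simp: r_def)
  then obtain x where "P x" "\<not> norm x < max \<rho> 1" by (auto simp: r_def dist_norm)
  thus ?thesis by (intro exI[of _ x]) auto
qed

lemma exponent_nonpos_of_frequently_bounded:
  fixes d B :: real
  assumes "\<And>\<rho>. \<exists>r \<ge> \<rho>. r > 0 \<and> r powr d \<le> B"
  shows "d \<le> 0"
proof (rule ccontr)
  assume "\<not> d \<le> 0"
  hence "filterlim (\<lambda>r::real. r powr d) at_top at_top" by real_asymp
  then obtain \<rho> where "\<And>r. r \<ge> \<rho> \<Longrightarrow> r powr d > B"
    by (auto simp: filterlim_at_top_dense eventually_at_top_linorder)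
  thus False using assms[of \<rho>] by force
qed

lemma decay_exponent_le:
  fixes g :: "real^'n::finite \<Rightarrow> ennreal"
  assumes up: "AE x in lborel. R \<le> norm x \<longrightarrow> g x \<le> ennreal (C * norm x powr (-\<theta>))"
    and low: "\<And>x. R' \<le> norm x \<Longrightarrow> ennreal (K * norm x powr (-e)) \<le> g x" and K: "K > 0"
  shows "\<theta> \<le> e" and "\<theta> = e \<Longrightarrow> K \<le> C"
proof -
  have large: "\<exists>r \<ge> \<rho>. r > 0 \<and> K * r powr (-e) \<le> C * r powr (-\<theta>)" for \<rho>
  proof -
    obtain x :: "real^'n" where x: "norm x \<ge> max \<rho> (max R (max R' 1))"
      and ux: "R \<le> norm x \<longrightarrow> g x \<le> ennreal (C * norm x powr (-\<theta>))"
      using AE_imp_ex_norm_ge[OF up] by blast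
    have "ennreal (K * norm x powr (-e)) \<le> ennreal (C * norm x powr (-\<theta>))"
      using low[of x] ux x by auto
    moreover have "x \<noteq> 0" using x by auto
    hence "K * norm x powr (-e) > 0" using K by simp
    ultimately have "K * norm x powr (-e) \<le> C * norm x powr (-\<theta>)" by (auto simp: ennreal_le_iff2)
    thus ?thesis using x by (intro exI[of _ "norm x"]) auto
  qed
  have "\<theta> - e \<le> 0"
  proof (rule exponent_nonpos_of_frequently_bounded[where B="C / K"])
    fix \<rho>
    obtain r where r: "r \<ge> \<rho>" "r > 0" "K * r powr (-e) \<le> C * r powr (-\<theta>)" using large by blast
    have "K * r powr (\<theta> - e) = (K * r powr (-e)) * r powr \<theta>"
      by (simp add: mult.assoc powr_add[symmetric])
    also have "\<dots> \<le> (C * r powr (-\<theta>)) * r powr \<theta>" by (rule mult_right_mono[OF r(3)]) simp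
    also have "\<dots> = C" using r by (simp add: mult.assoc powr_add[symmetric])
    finally show "\<exists>r \<ge> \<rho>. r > 0 \<and> r powr (\<theta> - e) \<le> C / K"
      using r K by (auto simp: field_simps)
  qed
  thus "\<theta> \<le> e" by simp
  show "K \<le> C" if "\<theta> = e"
  proof -
    obtain r where r: "r > 0" "K * r powr (-e) \<le> C * r powr (-\<theta>)" using large by blast
    thus ?thesis using that by simp
  qed
qed

lemma not_tendsto_if_bounded_away:
  fixes q :: "real \<Rightarrow> real"
  assumes bounds: "\<forall>\<^sub>F r in at_top. 1/C \<le> q r \<and> q r \<le> C" and C: "C > 0"
  shows "\<not> filterlim q at_top at_top" "\<not> (q \<longlongrightarrow> 0) at_top"
proof -
  show "\<not> filterlim q at_top at_top"
  proof
    assume "filterlim q at_top at_top"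
    hence "\<forall>\<^sub>F r in at_top. q r > C" by (simp add: filterlim_at_top_dense)
    hence "\<forall>\<^sub>F r in at_top. q r > C \<and> (1/C \<le> q r \<and> q r \<le> C)" using bounds by (rule eventually_conj)
    hence "\<forall>\<^sub>F r::real in at_top. False" by (rule eventually_mono) auto
    thus False by simp
  qed
  show "\<not> (q \<longlongrightarrow> 0) at_top"
  proof
    assume "(q \<longlongrightarrow> 0) at_top"
    hence "\<forall>\<^sub>F r in at_top. q r < 1/C" using C by (intro order_tendstoD(2)) auto
    hence "\<forall>\<^sub>F r in at_top. q r < 1/C \<and> (1/C \<le> q r \<and> q r \<le> C)" using bounds by (rule eventually_conj)
    hence "\<forall>\<^sub>F r::real in at_top. False" by (rule eventually_mono) auto
    thus False by simp
  qed
qed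

lemma asym_eq_ratio_bounded:
  fixes f g h :: "real^'n::finite \<Rightarrow> real"
  assumes "asym_eq f g" "asym_eq f h" and e: "norm e = 1"
  shows "\<exists>C>0. \<forall>\<^sub>F r in at_top. 1/C \<le> g (r *\<^sub>R e) / h (r *\<^sub>R e) \<and> g (r *\<^sub>R e) / h (r *\<^sub>R e) \<le> C"
proof -
  obtain c1 R1 where c1: "c1 > 0"
    and b1: "\<And>x. R1 \<le> norm x \<Longrightarrow> 1/c1 \<le> f x / g x \<and> f x / g x \<le> c1"
    using assms(1) unfolding asym_eq_def by blast
  obtain c2 R2 where c2: "c2 > 0"
    and b2: "\<And>x. R2 \<le> norm x \<Longrightarrow> 1/c2 \<le> f x / h x \<and> f x / h x \<le> c2"
    using assms(2) unfolding asym_eq_def by blast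
  have ratio: "1/(c1*c2) \<le> g x / h x \<and> g x / h x \<le> c1*c2" if x: "max R1 R2 \<le> norm x" for x
  proof -
    define A B where "A = f x / g x" and "B = f x / h x"
    have A: "1/c1 \<le> A" "A \<le> c1" and B: "1/c2 \<le> B" "B \<le> c2"
      using b1[of x] b2[of x] x by (auto simp: A_def B_def)
    have "0 < A" "0 < B" using A B c1 c2 by (smt (verit) divide_pos_pos)+
    hence "f x \<noteq> 0" "g x \<noteq> 0" by (auto simp: A_def)
    hence eq: "g x / h x = B / A" by (simp add: A_def B_def)
    have "(1/c2) / c1 \<le> B / A" using A B \<open>0 < A\<close> \<open>0 < B\<close> by (intro frac_le) auto
    moreover have "B / A \<le> c2 / (1/c1)" using A B \<open>0 < A\<close> \<open>0 < B\<close> c1 by (intro frac_le) auto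
    ultimately show ?thesis unfolding eq by (simp add: mult.commute)
  qed
  have "\<forall>\<^sub>F r in at_top. max R1 R2 \<le> norm (r *\<^sub>R e)"
    using eventually_ge_at_top[of "max R1 R2"] by eventually_elim (auto simp: e intro: order_trans[OF _ abs_ge_self])
  hence "\<forall>\<^sub>F r in at_top. 1/(c1*c2) \<le> g (r *\<^sub>R e) / h (r *\<^sub>R e) \<and> g (r *\<^sub>R e) / h (r *\<^sub>R e) \<le> c1*c2"
    by eventually_elim (rule ratio)
  thus ?thesis using c1 c2 by (intro exI[of _ "c1*c2"]) auto
qed

lemma asym_eq_powr_unique:
  fixes f :: "real^'n::finite \<Rightarrow> real"
  assumes "asym_eq f (\<lambda>x. norm x powr (-\<theta>))" "asym_eq f (\<lambda>x. norm x powr (-\<theta>'))"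
  shows "\<theta> = \<theta>'"
proof -
  obtain e :: "real^'n" where e: "norm e = 1" using vector_choose_size[of 1] by auto
  obtain C where C: "C > 0" and bounds: "\<forall>\<^sub>F r in at_top.
      1/C \<le> norm (r *\<^sub>R e) powr (-\<theta>) / norm (r *\<^sub>R e) powr (-\<theta>')
      \<and> norm (r *\<^sub>R e) powr (-\<theta>) / norm (r *\<^sub>R e) powr (-\<theta>') \<le> C"
    using asym_eq_ratio_bounded[OF assms e] by blast
  have "\<forall>\<^sub>F r in at_top. 1/C \<le> r powr (-\<theta>) / r powr (-\<theta>') \<and> r powr (-\<theta>) / r powr (-\<theta>') \<le> C"
    using bounds eventually_ge_at_top[of 0] by eventually_elim (simp add: e)
  note away = not_tendsto_if_bounded_away[OF this C]
  show ?thesis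
  proof (rule ccontr)
    assume "\<theta> \<noteq> \<theta>'"
    then consider "\<theta> < \<theta>'" | "\<theta>' < \<theta>" by linarith
    thus False
    proof cases
      case 1
      hence "filterlim (\<lambda>r::real. r powr (-\<theta>) / r powr (-\<theta>')) at_top at_top" by real_asymp
      thus False using away(1) by simp
    next
      case 2
      hence "((\<lambda>r::real. r powr (-\<theta>) / r powr (-\<theta>')) \<longlongrightarrow> 0) at_top" by real_asymp
      thus False using away(2) by simp
    qed
  qed
qed

lemma not_asym_eq_powr_log:
  fixes f :: "real^'n::finite \<Rightarrow> real"
  assumes decay: "asym_eq f (\<lambda>x. norm x powr (-\<theta>))" and k: "k > 0"
  shows "\<not> asym_eq f (\<lambda>x. norm x powr (-a) * ln (norm x) powr k)"
proof
  assume log: "asym_eq f (\<lambda>x. norm x powr (-a) * ln (norm x) powr k)"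
  obtain e :: "real^'n" where e: "norm e = 1" using vector_choose_size[of 1] by auto
  obtain C where C: "C > 0" and bounds: "\<forall>\<^sub>F r in at_top.
      1/C \<le> norm (r *\<^sub>R e) powr (-\<theta>) / (norm (r *\<^sub>R e) powr (-a) * ln (norm (r *\<^sub>R e)) powr k)
      \<and> norm (r *\<^sub>R e) powr (-\<theta>) / (norm (r *\<^sub>R e) powr (-a) * ln (norm (r *\<^sub>R e)) powr k) \<le> C"
    using asym_eq_ratio_bounded[OF decay log e] by blast
  have "\<forall>\<^sub>F r in at_top. 1/C \<le> r powr (-\<theta>) / (r powr (-a) * ln r powr k)
      \<and> r powr (-\<theta>) / (r powr (-a) * ln r powr k) \<le> C"
    using bounds eventually_ge_at_top[of 0] by eventually_elim (simp add: e)
  note away = not_tendsto_if_bounded_away[OF this C]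
  consider "\<theta> < a" | "\<theta> = a" | "a < \<theta>" by linarith
  thus False
  proof cases
    case 1
    hence "filterlim (\<lambda>r::real. r powr (-\<theta>) / (r powr (-a) * ln r powr k)) at_top at_top"
      using k by real_asymp
    thus False using away(1) by simp
  next
    case 2
    have "((\<lambda>r::real. r powr (-a) / (r powr (-a) * ln r powr k)) \<longlongrightarrow> 0) at_top"
      using k by real_asymp
    thus False using away(2) 2 by simp
  next
    case 3
    hence "((\<lambda>r::real. r powr (-\<theta>) / (r powr (-a) * ln r powr k)) \<longlongrightarrow> 0) at_top"
      using k by real_asymp
    thus False using away(2) by simp
  qed
qed

section \<open>Power-decaying solutions\<close>

lemma locally_integrable_borel_measurable:
  fixes f :: "real^'n::finite \<Rightarrow> real"
  assumes "locally_integrable f"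
  shows "f \<in> borel_measurable borel"
proof -
  have m: "(\<lambda>x. indicator (cball 0 (real i)) x *\<^sub>R f x) \<in> borel_measurable lborel" for i
  proof -
    have "set_integrable lborel (cball (0::real^'n) (real i)) f"
      using assms unfolding locally_integrable_def by auto
    thus ?thesis unfolding set_integrable_def by (rule borel_measurable_integrable)
  qed
  have "f \<in> borel_measurable lborel"
  proof (rule borel_measurable_LIMSEQ_real[OF _ m])
    fix x :: "real^'n"
    obtain N :: nat where N: "norm x \<le> real N" using real_arch_simple by blast
    have "eventually (\<lambda>i. indicator (cball 0 (real i)) x *\<^sub>R f x = f x) sequentially"
    proof (rule eventually_sequentiallyI[of N])
      fix i assume "N \<le> i"
      hence "norm x \<le> real i" using N by linarith
      thus "indicator (cball 0 (real i)) x *\<^sub>R f x = f x" by (simp add: dist_norm)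
    qed
    thus "(\<lambda>i. indicator (cball 0 (real i)) x *\<^sub>R f x) \<longlonglongrightarrow> f x" by (rule tendsto_eventually)
  qed
  thus ?thesis by simp
qed

lemma nn_integral_ball_pos:
  fixes f :: "real^'n::finite \<Rightarrow> real"
  assumes fm: "f \<in> borel_measurable borel" and pos: "\<And>y. y \<noteq> 0 \<Longrightarrow> f y > 0"
  shows "0 < (\<integral>\<^sup>+y\<in>ball 0 1. ennreal (f y) \<partial>lborel)"
proof (rule ccontr)
  assume "\<not> ?thesis"
  hence "(\<integral>\<^sup>+y. ennreal (f y) * indicator (ball 0 1) y \<partial>lborel) = 0" by (simp add: not_less)
  moreover have mm: "(\<lambda>y. ennreal (f y) * indicator (ball (0::real^'n) 1) y) \<in> borel_measurable lborel"
    using fm by (intro borel_measurable_times_ennreal borel_measurable_indicator) auto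
  ultimately have "AE y in lborel. ennreal (f y) * indicator (ball 0 1) y = 0"
    using nn_integral_0_iff_AE[OF mm] by simp
  hence "\<exists>y\<in>ball (0::real^'n) 1 - ball 0 (1/2). ennreal (f y) * indicator (ball 0 1) y = 0"
    by (rule AE_imp_ex_in) (auto intro!: emeasure_annulus_pos)
  then obtain y :: "real^'n" where y: "norm y < 1" "\<not> norm y < 1/2" "ennreal (f y) = 0"
    by (auto simp: dist_norm)
  have "y \<noteq> 0" using y(2) by auto
  hence "f y > 0" by (rule pos)
  thus False using y(3) by simp
qed

lemma wolff_le_of_decaying_solution:
  fixes v c f :: "real^'n::finite \<Rightarrow> real"
  assumes eq: "AE x in lborel. ennreal (v x) = ennreal (c x) * wolff \<beta> \<gamma> f x"
    and c: "double_bounded c" and decay: "asym_eq v (\<lambda>x. norm x powr (-\<theta>))"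
  shows "\<exists>C>0. \<exists>R. AE x in lborel. R \<le> norm x \<longrightarrow> wolff \<beta> \<gamma> f x \<le> ennreal (C * norm x powr (-\<theta>))"
proof -
  obtain Cc where Cc: "Cc > 0" and c_ge: "\<And>x. 1/Cc \<le> c x"
    using c unfolding double_bounded_def by blast
  obtain cv R where cv: "cv > 0"
    and v_le: "\<And>x. R \<le> norm x \<Longrightarrow> v x \<le> cv * norm x powr (-\<theta>) \<and> (1/cv) * norm x powr (-\<theta>) \<le> v x"
    using asym_eq_powrD[OF decay] by blast
  have "wolff \<beta> \<gamma> f x \<le> ennreal (Cc * cv * norm x powr (-\<theta>))"
    if x: "R \<le> norm x" and e: "ennreal (v x) = ennreal (c x) * wolff \<beta> \<gamma> f x" for x
  proof -
    have "ennreal Cc * ennreal (1/Cc) = 1" using Cc by (simp add: ennreal_mult'[symmetric])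
    hence "wolff \<beta> \<gamma> f x = (ennreal Cc * ennreal (1/Cc)) * wolff \<beta> \<gamma> f x" by simp
    also have "\<dots> = ennreal Cc * (ennreal (1/Cc) * wolff \<beta> \<gamma> f x)" by (simp only: mult.assoc)
    also have "\<dots> \<le> ennreal Cc * (ennreal (c x) * wolff \<beta> \<gamma> f x)"
      using c_ge[of x] by (intro mult_left_mono mult_right_mono ennreal_leI) auto
    also have "\<dots> = ennreal Cc * ennreal (v x)" using e by simp
    also have "\<dots> \<le> ennreal Cc * ennreal (cv * norm x powr (-\<theta>))"
      using v_le[OF x] by (intro mult_left_mono ennreal_leI) auto
    also have "\<dots> = ennreal (Cc * cv * norm x powr (-\<theta>))"
      using Cc cv by (simp add: ennreal_mult' mult.assoc)
    finally show ?thesis .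
  qed
  hence "AE x in lborel. R \<le> norm x \<longrightarrow> wolff \<beta> \<gamma> f x \<le> ennreal (Cc * cv * norm x powr (-\<theta>))"
    by (intro eventually_mono[OF eq]) auto
  thus ?thesis using Cc cv by (intro exI[of _ "Cc * cv"]) auto
qed

locale decaying_wolff_solution =
  fixes \<beta> \<gamma> p q \<sigma>1 \<sigma>2 :: real and c1 c2 u v :: "real^'n::finite \<Rightarrow> real" and \<theta>1 \<theta>2 a b :: real
  assumes gamma_gt_1: "\<gamma> > 1" and beta_gamma_less: "\<beta> * \<gamma> < real CARD('n)" and p_pos: "p > 0"
    and double_bounded_c1: "double_bounded c1" and double_bounded_c2: "double_bounded c2"
    and solution: "is_solution \<beta> \<gamma> p q \<sigma>1 \<sigma>2 c1 c2 u v"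
    and bounded_u: "bounded (range u)" and bounded_v: "bounded (range v)"
    and u_pos: "\<And>x. u x > 0" and v_pos: "\<And>x. v x > 0"
    and theta1_pos: "\<theta>1 > 0" and theta2_pos: "\<theta>2 > 0"
    and u_decay: "asym_eq u (\<lambda>x. norm x powr (-\<theta>1))"
    and v_decay: "asym_eq v (\<lambda>x. norm x powr (-\<theta>2))"
  defines "a \<equiv> (real CARD('n) - \<beta> * \<gamma>) / (\<gamma> - 1)"
    and "b \<equiv> (p * a - (\<beta> * \<gamma> + \<sigma>2)) / (\<gamma> - 1)"
begin

definition f1 :: "real^'n \<Rightarrow> real" where "f1 = (\<lambda>y. norm y powr \<sigma>1 * v y powr q)"
definition f2 :: "real^'n \<Rightarrow> real" where "f2 = (\<lambda>y. norm y powr \<sigma>2 * u y powr p)"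

lemma a_pos: "a > 0"
  using gamma_gt_1 beta_gamma_less by (simp add: a_def)

lemma b_minus_a: "(b - a) * (\<gamma> - 1) = p * a - \<sigma>2 - real CARD('n)"
proof -
  have "a * (\<gamma> - 1) = real CARD('n) - \<beta> * \<gamma>" "b * (\<gamma> - 1) = p * a - (\<beta> * \<gamma> + \<sigma>2)"
    using gamma_gt_1 by (simp_all add: a_def b_def)
  thus ?thesis by (simp add: left_diff_distrib)
qed

lemma measurable_u_v [measurable]: "u \<in> borel_measurable borel" "v \<in> borel_measurable borel"
  using solution locally_integrable_borel_measurable unfolding is_solution_def by blast+

lemma u_equation: "AE x in lborel. ennreal (u x) = ennreal (c1 x) * wolff \<beta> \<gamma> f1 x"
  and v_equation: "AE x in lborel. ennreal (v x) = ennreal (c2 x) * wolff \<beta> \<gamma> f2 x"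
  using solution unfolding is_solution_def f1_def f2_def by blast+

lemma measurable_f1_f2 [measurable]: "f1 \<in> borel_measurable borel" "f2 \<in> borel_measurable borel"
  unfolding f1_def f2_def by measurable

lemma optimal_integrable_iff_exponents:
  "optimal_integrable \<beta> \<gamma> p \<sigma>2 u v \<longleftrightarrow> a \<le> \<theta>1 \<and> (if 0 < b then min a b else a) \<le> \<theta>2"
proof -
  define n where "n = real CARD('n)"
  have n: "n > 0" by (simp add: n_def)
  have threshold_u: "n * (\<gamma> - 1) / (n - \<beta> * \<gamma>) = n / a"
    using gamma_gt_1 by (simp add: a_def n_def)
  have threshold_v: "max (n / a) (n * (\<gamma> - 1) / (p * a - (\<beta> * \<gamma> + \<sigma>2)))
      = n / (if 0 < b then min a b else a)"
  proof (cases "0 < b")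
    case True
    have "n * (\<gamma> - 1) / (p * a - (\<beta> * \<gamma> + \<sigma>2)) = n / b"
      using gamma_gt_1 by (simp add: b_def)
    moreover have "max (n / a) (n / b) = n / min a b"
    proof (cases "a \<le> b")
      case le: True
      hence "n / b \<le> n / a" using a_pos n by (intro divide_left_mono) auto
      thus ?thesis using le by (simp add: max_absorb1 min_absorb1)
    next
      case False
      hence "n / a \<le> n / b" using \<open>0 < b\<close> n by (intro divide_left_mono) auto
      thus ?thesis using False by (simp add: max_absorb2 min_absorb2)
    qed
    ultimately show ?thesis using True threshold_u by simp
  next
    case False
    hence "p * a - (\<beta> * \<gamma> + \<sigma>2) \<le> 0"
      using gamma_gt_1 by (auto simp: b_def zero_less_divide_iff not_less)
    hence "n * (\<gamma> - 1) / (p * a - (\<beta> * \<gamma> + \<sigma>2)) \<le> 0"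
      using gamma_gt_1 n by (intro divide_nonneg_nonpos) auto
    moreover have "0 < n / a" using n a_pos by simp
    ultimately show ?thesis using False threshold_u by simp
  qed
  have v_exp: "0 < (if 0 < b then min a b else a)" using a_pos by simp
  show ?thesis
    unfolding optimal_integrable_def Let_def a_def[symmetric]
      threshold_u[unfolded n_def] threshold_v[unfolded n_def]
    using integrable_powr_iff_decay[OF measurable_u_v(1) bounded_u u_decay theta1_pos a_pos]
      integrable_powr_iff_decay[OF measurable_u_v(2) bounded_v v_decay theta2_pos v_exp]
    by simp
qed

lemma fast_rates_iff_exponents:
  "fast_rates \<beta> \<gamma> p \<sigma>2 u v \<longleftrightarrow> \<theta>1 = a \<and> (a < b \<longrightarrow> \<theta>2 = a) \<and> b \<noteq> a \<and> (b < a \<longrightarrow> \<theta>2 = b)"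
proof -
  have rate_iff: "asym_eq w (\<lambda>x. norm x powr (-e)) \<longleftrightarrow> \<theta> = e"
    if decay: "asym_eq w (\<lambda>x. norm x powr (-\<theta>))" for w :: "real^'n \<Rightarrow> real" and \<theta> e
  proof
    assume "asym_eq w (\<lambda>x. norm x powr (-e))"
    thus "\<theta> = e" by (rule asym_eq_powr_unique[OF decay])
  qed (use decay in simp)
  have no_log: "\<not> asym_eq v (\<lambda>x. norm x powr (-a) * ln (norm x) powr (1 / (\<gamma> - 1)))"
    using gamma_gt_1 by (intro not_asym_eq_powr_log[OF v_decay]) simp
  have g: "\<gamma> - 1 > 0" using gamma_gt_1 by simp
  have "real CARD('n) < p * a - \<sigma>2 \<longleftrightarrow> 0 < (b - a) * (\<gamma> - 1)"
    "p * a - \<sigma>2 = real CARD('n) \<longleftrightarrow> (b - a) * (\<gamma> - 1) = 0"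
    "p * a - \<sigma>2 < real CARD('n) \<longleftrightarrow> (b - a) * (\<gamma> - 1) < 0"
    using b_minus_a by linarith+
  hence signs: "real CARD('n) < p * a - \<sigma>2 \<longleftrightarrow> a < b" "p * a - \<sigma>2 = real CARD('n) \<longleftrightarrow> b = a"
    "p * a - \<sigma>2 < real CARD('n) \<longleftrightarrow> b < a"
    using g by (simp_all add: zero_less_mult_iff mult_less_0_iff)
  show ?thesis
    unfolding fast_rates_def Let_def a_def[symmetric] b_def[symmetric] signs
      rate_iff[OF u_decay] rate_iff[OF v_decay]
    using no_log by blast
qed

lemma exponents_le_fast: "\<theta>1 \<le> a" "\<theta>2 \<le> a"
proof -
  have "f1 y > 0" "f2 y > 0" if "y \<noteq> 0" for y
    using that u_pos[of y] v_pos[of y] by (simp_all add: f1_def f2_def zero_less_mult_iff)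
  hence "0 < (\<integral>\<^sup>+y\<in>ball 0 1. ennreal (f1 y) \<partial>lborel)" "0 < (\<integral>\<^sup>+y\<in>ball 0 1. ennreal (f2 y) \<partial>lborel)"
    using measurable_f1_f2 by (simp_all add: nn_integral_ball_pos)
  note fast = this[THEN wolff_ge_fast_decay[OF gamma_gt_1 beta_gamma_less], folded a_def]
  obtain K1 K2 where K: "K1 > 0" "K2 > 0"
    and W1: "\<forall>x. norm x \<ge> 1 \<longrightarrow> ennreal (K1 * norm x powr (-a)) \<le> wolff \<beta> \<gamma> f1 x"
    and W2: "\<forall>x. norm x \<ge> 1 \<longrightarrow> ennreal (K2 * norm x powr (-a)) \<le> wolff \<beta> \<gamma> f2 x"
    using fast by blast
  obtain C R where "AE x in lborel. R \<le> norm x \<longrightarrow> wolff \<beta> \<gamma> f1 x \<le> ennreal (C * norm x powr (-\<theta>1))"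
    using wolff_le_of_decaying_solution[OF u_equation double_bounded_c1 u_decay] by blast
  thus "\<theta>1 \<le> a" using W1 K(1) by (intro decay_exponent_le(1)) auto
  obtain C' R' where "AE x in lborel. R' \<le> norm x \<longrightarrow> wolff \<beta> \<gamma> f2 x \<le> ennreal (C' * norm x powr (-\<theta>2))"
    using wolff_le_of_decaying_solution[OF v_equation double_bounded_c2 v_decay] by blast
  thus "\<theta>2 \<le> a" using W2 K(2) by (intro decay_exponent_le(1)) auto
qed

lemma f2_lower_if_u_fast:
  assumes "\<theta>1 = a"
  obtains c R where "c > 0" "R > 0" "\<And>y. R \<le> norm y \<Longrightarrow> c * norm y powr (\<sigma>2 - p * a) \<le> f2 y"
proof -
  obtain cu R where cu: "cu > 0" and R: "R > 0" and u_bounds: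
      "\<And>x. R \<le> norm x \<Longrightarrow> u x \<le> cu * norm x powr (-a) \<and> (1/cu) * norm x powr (-a) \<le> u x"
    by (rule asym_eq_powrD[OF u_decay[unfolded assms]]) blast
  have "(1/cu) powr p * norm y powr (\<sigma>2 - p * a) \<le> f2 y" if y: "R \<le> norm y" for y
  proof -
    have y0: "norm y > 0" using y R by linarith
    have "(1/cu) * norm y powr (-a) \<le> u y" using u_bounds[OF y] by blast
    hence "(1/cu) powr p * norm y powr (-(p*a)) \<le> u y powr p"
      using y0 cu p_pos by (intro decay_powr_le_powr) auto
    hence "norm y powr \<sigma>2 * ((1/cu) powr p * norm y powr (-(p*a))) \<le> f2 y"
      unfolding f2_def by (rule mult_left_mono) simp
    thus ?thesis using powr_add[of "norm y" \<sigma>2 "-(p*a)"] by (simp add: mult.left_commute)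
  qed
  thus ?thesis using that[of "(1/cu) powr p" R] cu R by simp
qed

lemma v_exponent_le:
  assumes "\<theta>1 = a" and e: "0 < e" "b \<le> e"
  shows "\<theta>2 \<le> e"
proof -
  obtain c R where c: "c > 0" and R: "R > 0"
    and f2_ge: "\<And>y. R \<le> norm y \<Longrightarrow> c * norm y powr (\<sigma>2 - p * a) \<le> f2 y"
    using f2_lower_if_u_fast[OF assms(1)] by blast
  define k where "k = - (\<beta> * \<gamma>) - e * (\<gamma> - 1)"
  have "p * a - (\<beta> * \<gamma> + \<sigma>2) \<le> e * (\<gamma> - 1)"
    using e(2) gamma_gt_1 by (simp add: b_def pos_divide_le_eq)
  hence k: "k \<le> \<sigma>2 - p * a" by (simp add: k_def)
  have f2_ge': "c * norm y powr k \<le> f2 y" if y: "max R 1 \<le> norm y" for y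
  proof -
    have "norm y powr k \<le> norm y powr (\<sigma>2 - p * a)" using k y by (intro powr_mono) auto
    hence "c * norm y powr k \<le> c * norm y powr (\<sigma>2 - p * a)" using c by simp
    also have "\<dots> \<le> f2 y" using y by (intro f2_ge) simp
    finally show ?thesis .
  qed
  have e_eq: "e = - (k + \<beta> * \<gamma>) / (\<gamma> - 1)" using gamma_gt_1 by (simp add: k_def)
  have "0 < max R 1" by simp
  from wolff_ge_power_decay[OF gamma_gt_1 this c e(1) e_eq f2_ge']
  obtain K where K: "K > 0"
    and W: "\<forall>x. norm x \<ge> max R 1 \<longrightarrow> ennreal (K * norm x powr (-e)) \<le> wolff \<beta> \<gamma> f2 x"
    by auto
  obtain C R' where "AE x in lborel. R' \<le> norm x \<longrightarrow> wolff \<beta> \<gamma> f2 x \<le> ennreal (C * norm x powr (-\<theta>2))"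
    using wolff_le_of_decaying_solution[OF v_equation double_bounded_c2 v_decay] by blast
  thus ?thesis using W K by (intro decay_exponent_le(1)[where R'="max R 1"]) auto
qed

lemma v_exponent_ne_fast_if_critical:
  assumes "\<theta>1 = a" "b = a"
  shows "\<theta>2 \<noteq> a"
proof
  assume "\<theta>2 = a"
  obtain C R where C: "C > 0"
    and up: "AE x in lborel. R \<le> norm x \<longrightarrow> wolff \<beta> \<gamma> f2 x \<le> ennreal (C * norm x powr (-\<theta>2))"
    using wolff_le_of_decaying_solution[OF v_equation double_bounded_c2 v_decay] by blast
  obtain c R0 where c: "c > 0" and R0: "R0 > 0"
    and f2_ge: "\<And>y. R0 \<le> norm y \<Longrightarrow> c * norm y powr (\<sigma>2 - p * a) \<le> f2 y"
    using f2_lower_if_u_fast[OF assms(1)] by blast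
  have "\<sigma>2 - p * a = - real CARD('n)" using b_minus_a assms(2) by simp
  with f2_ge have "\<And>y. R0 \<le> norm y \<Longrightarrow> c * norm y powr (- real CARD('n)) \<le> f2 y" by simp
  from wolff_ge_critical[OF gamma_gt_1 beta_gamma_less R0 c measurable_f1_f2(2) this, of "C + 1"]
  obtain R' where "\<forall>x. R' \<le> norm x \<longrightarrow> ennreal ((C + 1) * norm x powr (-\<theta>2)) \<le> wolff \<beta> \<gamma> f2 x"
    using \<open>\<theta>2 = a\<close> by (auto simp: a_def)
  hence "C + 1 \<le> C" using \<open>\<theta>2 = a\<close> C by (intro decay_exponent_le(2)[OF up, of R']) auto
  thus False by simp
qed

theorem optimal_integrable_iff_fast_rates:
  "optimal_integrable \<beta> \<gamma> p \<sigma>2 u v \<longleftrightarrow> fast_rates \<beta> \<gamma> p \<sigma>2 u v"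
  unfolding optimal_integrable_iff_exponents fast_rates_iff_exponents
proof (cases "\<theta>1 = a")
  case False
  thus "(a \<le> \<theta>1 \<and> (if 0 < b then min a b else a) \<le> \<theta>2)
      \<longleftrightarrow> \<theta>1 = a \<and> (a < b \<longrightarrow> \<theta>2 = a) \<and> b \<noteq> a \<and> (b < a \<longrightarrow> \<theta>2 = b)"
    using exponents_le_fast(1) by auto
next
  case u_fast: True
  note \<theta>2_le = exponents_le_fast(2)
  consider "a < b" | "b = a" | "0 < b" "b < a" | "b \<le> 0" using a_pos by linarith
  thus "(a \<le> \<theta>1 \<and> (if 0 < b then min a b else a) \<le> \<theta>2)
      \<longleftrightarrow> \<theta>1 = a \<and> (a < b \<longrightarrow> \<theta>2 = a) \<and> b \<noteq> a \<and> (b < a \<longrightarrow> \<theta>2 = b)"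
  proof cases
    case 1
    thus ?thesis using u_fast \<theta>2_le a_pos by (auto simp: min_absorb1)
  next
    case 2
    thus ?thesis using u_fast v_exponent_ne_fast_if_critical[OF u_fast] \<theta>2_le a_pos by simp
  next
    case 3
    thus ?thesis using u_fast v_exponent_le[OF u_fast \<open>0 < b\<close>] by (auto simp: min_absorb2)
  next
    case 4
    have "\<theta>2 \<le> \<theta>2 / 2" using theta2_pos 4 by (intro v_exponent_le[OF u_fast]) auto
    thus ?thesis using theta2_pos by simp
  qed
qed

end

theorem theorem5:
  fixes u v c1 c2 :: "real^'n::finite \<Rightarrow> real"
    and \<beta> \<gamma> p q \<sigma>1 \<sigma>2 :: real
  assumes "CARD('n) \<ge> 3"
    and "\<beta> > 0" and "\<gamma> > 1" and "\<beta> * \<gamma> < real CARD('n)"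
    and "p > 0" and "q > 0" and "q \<ge> p" and "p * q > (\<gamma> - 1)\<^sup>2"
    and "\<sigma>1 > - \<beta> * \<gamma>" and "\<sigma>2 > - \<beta> * \<gamma>" and "\<sigma>1 \<le> \<sigma>2"
    and "double_bounded c1" and "double_bounded c2"
    and "q0 \<beta> \<gamma> p q \<sigma>1 \<sigma>2 + p0 \<beta> \<gamma> p q \<sigma>1 \<sigma>2 \<le> (real CARD('n) - \<beta> * \<gamma>) / (\<gamma> - 1)"
    and "is_solution \<beta> \<gamma> p q \<sigma>1 \<sigma>2 c1 c2 u v"
    and "bounded (range u)" and "bounded (range v)"
    and "decaying u v"
  shows "optimal_integrable \<beta> \<gamma> p \<sigma>2 u v \<longleftrightarrow> fast_rates \<beta> \<gamma> p \<sigma>2 u v"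
proof -
  obtain \<theta>1 \<theta>2 where \<theta>: "\<And>x. u x > 0" "\<And>x. v x > 0" "\<theta>1 > 0" "\<theta>2 > 0"
    "asym_eq u (\<lambda>x. norm x powr (-\<theta>1))" "asym_eq v (\<lambda>x. norm x powr (-\<theta>2))"
    using \<open>decaying u v\<close> unfolding decaying_def by blast
  define a where "a = (real CARD('n) - \<beta> * \<gamma>) / (\<gamma> - 1)"
  define b where "b = (p * a - (\<beta> * \<gamma> + \<sigma>2)) / (\<gamma> - 1)"
  interpret decaying_wolff_solution \<beta> \<gamma> p q \<sigma>1 \<sigma>2 c1 c2 u v \<theta>1 \<theta>2 a b
    using assms \<theta> unfolding a_def b_def by unfold_locales auto
  show ?thesis by (rule optimal_integrable_iff_fast_rates)
qed

end
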